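(* Let $q=p^m$ with $p$ an odd prime and $m$ a positive integer. Let $\delta\in\mathbb{F}_{q^2}$, $b_1,b_2,b_3\in\mathbb{F}_q$, let $\varepsilon$ be a primitive element of $\mathbb{F}_{q^2}$, let $d_1,d_2,d_3$ be odd integers and $t=(q+1)/2$. Let $i$ be a non-negative integer with $i<2m$, let $j$ be the integer with $0\leq j<m$ and $j\equiv i\pmod m$, and let $d=\gcd(m,j)$. Let $$P(x)=b_1\varepsilon^{td_1}(x^q+x+\delta)^{p^i+q}+b_2\varepsilon^{td_2}(x^q+x+\delta)^{p^i+1}+b_3\varepsilon^{td_3}(x^q+x+\delta)^{2p^i}-x,$$ and put $$A=(\delta^q-\delta)(b_1\varepsilon^{td_1}-b_2\varepsilon^{td_2})+2b_3\varepsilon^{td_3}(\delta^{p^i}-\delta^{p^iq}),$$ $$B=1+(\delta^{p^iq}-\delta^{p^i})(b_1\varepsilon^{td_1}+b_2\varepsilon^{td_2}),$$ $$C=(\delta^{p^i+q}-\delta^{p^iq+1})b_1\varepsilon^{td_1}+(\delta^{p^i+1}-\delta^{p^iq+q})b_2\varepsilon^{td_2}+(\delta^{2p^i}-\delta^{2p^iq})b_3\varepsilon^{td_3}.$$ For $y$ define $G(y)=b_1\varepsilon^{td_1}y^{p^i+q}+b_2\varepsilon^{td_2}y^{p^i+1}+b_3\varepsilon^{td_3}y^{2p^i}$. Then: (1) If $i\in\{0,m\}$, then $P$ permutes $\mathbb{F}_{q^2}$ if and only if $A-B\neq0$, and in that case $P^{-1}(x)=G\!\left((A-B)^{-1}(x^q+x)-(A-B)^{-1}C+\delta\right)-x$.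 (2) If $i\notin\{0,m\}$, $A=0$ and $B\neq0$, then $P$ permutes $\mathbb{F}_{q^2}$ and $P^{-1}(x)=G\!\left(-B^{-1}(x^q+x)+B^{-1}C+\delta\right)-x$. (3) If $i\notin\{0,m\}$, $A\neq0$ and $B=0$, then $P$ permutes $\mathbb{F}_{q^2}$ and $P^{-1}(x)=G\!\left(A^{-p^{m-j}}(x^q+x)^{p^{m-j}}-(C/A)^{p^{m-j}}+\delta\right)-x$. (4) If $i\notin\{0,m\}$ and $AB\neq0$, then $P$ permutes $\mathbb{F}_{q^2}$ if and only if $N_{p^m/p^d}(B/A)\neq1$, and in that case $$P^{-1}(x)=G\!\left(\delta+\frac{N_{p^m/p^d}(B/A)}{1-N_{p^m/p^d}(B/A)}\sum_{k=0}^{m/d-1}\left(\frac{A}{B}\right)^{\frac{p^{(k+1)j}-1}{p^j-1}}\left(\frac{x^q+x}{A}-\frac{C}{A}\right)^{p^{kj}}\right)-x.$$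
   Context: For $a\in\mathbb{F}_{p^m}$ and $d\mid m$, $N_{p^m/p^d}(a)=a^{(p^m-1)/(p^d-1)}$ is the norm to $\mathbb{F}_{p^d}$. The compositional inverse of a permutation polynomial $f$ of $\mathbb{F}_{Q}$ is the unique polynomial $f^{-1}$ (modulo $x^Q-x$) with $f(f^{-1}(c))=f^{-1}(f(c))=c$ for all $c\in\mathbb{F}_Q$. The auxiliary notation $G$ is only shorthand for writing out the three-term expression. *)

theory Defs
  imports Main "HOL-Computational_Algebra.Primes"
begin

definition primitive_elem :: "'a::{field,finite} \<Rightarrow> bool" where
  "primitive_elem e \<longleftrightarrow> e \<noteq> 0 \<and> (\<forall>y. y \<noteq> 0 \<longrightarrow> (\<exists>k::nat. y = e ^ k))"

definition normF :: "nat \<Rightarrow> nat \<Rightarrow> nat \<Rightarrow> 'a::field \<Rightarrow> 'a" where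
  "normF p m d a = a ^ ((p ^ m - 1) div (p ^ d - 1))"

end

theory Submission
  imports Defs "HOL-Number_Theory.Residues"
begin

text \<open>
  Write \<open>T x = x\<^sup>q + x\<close> for the trace to \<open>\<bbbF>\<^sub>q\<close>. Every \<open>e\<^sub>k\<close> is an odd power of
  \<open>\<epsilon>\<^sup>t\<close>, and \<open>(\<epsilon>\<^sup>t)\<^sup>q = -\<epsilon>\<^sup>t\<close> because \<open>\<epsilon>\<close> has order \<open>q\<^sup>2 - 1\<close>; hence \<open>e\<^sub>k\<^sup>q = -e\<^sub>k\<close>,
  and expanding \<open>G\<close> gives \<open>T (G (s + \<delta>)) = A s\<^bsup>p\<^sup>i\<^esup> + (1 - B) s + C\<close> for all \<open>s\<close> in \<open>\<bbbF>\<^sub>q\<close>.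
  Since \<open>P x = G (T x + \<delta>) - x\<close>, every solution \<open>R \<in> \<bbbF>\<^sub>q\<close> of \<open>A R\<^bsup>p\<^sup>i\<^esup> - B R = T c - C\<close>
  gives the preimage \<open>G (R + \<delta>) - c\<close> of \<open>c\<close>, while a nonzero root in \<open>\<bbbF>\<^sub>q\<close> of
  \<open>A s\<^bsup>p\<^sup>i\<^esup> = B s\<close> gives two points with the same image. On \<open>\<bbbF>\<^sub>q\<close> the exponent \<open>p\<^sup>i\<close> acts
  as \<open>p\<^sup>j\<close>, trivially when \<open>i \<in> {0, m}\<close>. So the equation is linear in that case and is solved
  by one Frobenius power when \<open>A\<close> or \<open>B\<close> vanishes. Otherwise it reads
  \<open>R\<^bsup>p\<^sup>j\<^esup> = (B/A) R + (T c - C)/A\<close>: a twisted geometric sum along the Frobenius orbit solves it when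
  the norm of \<open>B/A\<close> to \<open>\<bbbF>\<^bsub>p\<^sup>d\<^esub>\<close> is not \<open>1\<close>, and when the norm is \<open>1\<close>, Hilbert's
  Theorem 90 yields a nonzero root.
\<close>

lemma power_minus_one_eq_geometric_nat:
  fixes x :: nat
  assumes "x \<ge> 1"
  shows "x ^ n - 1 = (x - 1) * (\<Sum>l<n. x ^ l)"
proof -
  have "int (x ^ n - 1) = int x ^ n - 1"
    using assms by simp
  also have "\<dots> = (int x - 1) * (\<Sum>l<n. int x ^ l)"
    by (rule power_diff_1_eq)
  also have "\<dots> = int ((x - 1) * (\<Sum>l<n. x ^ l))"
    using assms by simp
  finally show ?thesis
    by (simp only: of_nat_eq_iff)
qed

lemma power_minus_one_div_nat:
  fixes x :: nat
  assumes "x \<ge> 2"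
  shows "(x ^ n - 1) div (x - 1) = (\<Sum>l<n. x ^ l)"
  using power_minus_one_eq_geometric_nat[of x n] assms by simp

lemma power_mult_minus_one_div_nat:
  fixes x :: nat
  assumes "x ^ j \<ge> 2"
  shows "(x ^ (k * j) - 1) div (x ^ j - 1) = (\<Sum>l<k. (x ^ j) ^ l)"
  using power_minus_one_div_nat[OF assms, of k] by (simp add: mult.commute power_mult)

lemma power_minus_one_dvd_nat:
  fixes x :: nat
  assumes "x \<ge> 1"
  shows "(x ^ n - 1) dvd (x ^ (n * k) - 1)"
  using power_minus_one_eq_geometric_nat[of "x ^ n" k] assms by (simp add: power_mult one_le_power)

lemma gcd_power_minus_one_nat:
  fixes x :: nat
  assumes x: "x \<ge> 1"
  shows "gcd (x ^ a - 1) (x ^ b - 1) = x ^ gcd a b - 1"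
proof (induction a b rule: gcd_nat_induct)
  case (step a b)
  define r where "r = a mod b"
  obtain K where K: "x ^ (b * (a div b)) - 1 = (x ^ b - 1) * K"
    using power_minus_one_dvd_nat[OF x, of b "a div b"] by (auto elim: dvdE)
  have "x ^ r \<ge> 1" "x ^ (b * (a div b)) \<ge> 1"
    using x by simp_all
  moreover have "x ^ a = x ^ r * x ^ (b * (a div b))"
    by (simp add: r_def flip: power_add)
  ultimately have "x ^ a - 1 = x ^ r * (x ^ (b * (a div b)) - 1) + (x ^ r - 1)"
    by (simp add: diff_mult_distrib2 algebra_simps)
  also have "\<dots> = (x ^ r * K) * (x ^ b - 1) + (x ^ r - 1)"
    using K by simp
  finally have "gcd (x ^ a - 1) (x ^ b - 1) = gcd (x ^ b - 1) (x ^ r - 1)"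
    by (metis gcd.commute gcd_add_mult)
  also have "\<dots> = x ^ gcd a b - 1"
    using step by (simp add: r_def gcd_non_0_nat)
  finally show ?case .
qed simp

lemma geometric_sum_Suc:
  fixes r :: "'a::comm_semiring_1"
  shows "(\<Sum>l<Suc n. r ^ l) = 1 + r * (\<Sum>l<n. r ^ l)"
  by (simp add: sum.lessThan_Suc_shift sum_distrib_left del: sum.lessThan_Suc)

lemma power_power_commute:
  fixes x :: "'a::monoid_mult"
  shows "(x ^ a) ^ b = (x ^ b) ^ a"
  by (simp flip: power_mult add: mult.commute)

lemma power_iterate_fixed:
  fixes x :: "'a::monoid_mult"
  assumes "x ^ s = x"
  shows "x ^ (s ^ k) = x"
  by (induction k) (simp_all add: power_mult power_power_commute[of x _ s] assms)

lemma power_prime_power_mod: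
  fixes x :: "'a::monoid_mult"
  assumes "x ^ (p ^ m) = x"
  shows "x ^ (p ^ a) = x ^ (p ^ (a mod m))"
proof -
  have "p ^ a = p ^ (a mod m) * (p ^ m) ^ (a div m)"
    by (simp flip: power_add power_mult add: mult.commute)
  moreover have "(x ^ (p ^ (a mod m))) ^ (p ^ m) = x ^ (p ^ (a mod m))"
    by (simp add: power_power_commute[of x _ "p ^ m"] assms)
  ultimately show ?thesis
    by (simp add: power_mult power_iterate_fixed)
qed

lemma right_inverse_imp_inverse:
  fixes f g :: "'a::finite \<Rightarrow> 'a"
  assumes "\<And>c. f (g c) = c"
  shows "bij f \<and> (\<forall>c. f (g c) = c \<and> g (f c) = c)"
proof -
  have "surj f"
    using assms by (metis surjI)
  then have "inj f"
    by (simp add: finite_UNIV_surj_inj)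
  then show ?thesis
    using \<open>surj f\<close> assms by (simp add: bij_def injD)
qed

lemma primitive_elem_power_eq_1_iff:
  fixes \<epsilon> :: "'a::{field,finite}"
  assumes "primitive_elem \<epsilon>"
  shows "\<epsilon> ^ k = 1 \<longleftrightarrow> (card (UNIV :: 'a set) - 1) dvd k"
proof -
  define U :: "'a monoid" where "U = \<lparr>carrier = UNIV - {0}, monoid.mult = (*), one = 1\<rparr>"
  interpret U: group U
  proof (rule groupI)
    fix x assume "x \<in> carrier U"
    then show "\<exists>y\<in>carrier U. y \<otimes>\<^bsub>U\<^esub> x = \<one>\<^bsub>U\<^esub>"
      by (intro bexI[of _ "inverse x"]) (auto simp: U_def)
  qed (auto simp: U_def mult.assoc)
  have pow: "x [^]\<^bsub>U\<^esub> n = x ^ n" for x and n :: nat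
    by (induction n) (simp_all add: U_def mult.commute)
  have \<epsilon>_unit: "\<epsilon> \<in> carrier U"
    using assms by (simp add: U_def primitive_elem_def)
  have "generate U {\<epsilon>} = {\<epsilon> [^]\<^bsub>U\<^esub> n | n. n \<in> (UNIV :: nat set)}"
    using assms by (intro U.generate_pow_on_finite_carrier) (simp_all add: U_def primitive_elem_def)
  also have "\<dots> = carrier U"
    using assms unfolding pow by (auto simp: U_def primitive_elem_def)
  finally have "U.ord \<epsilon> = card (UNIV :: 'a set) - 1"
    using U.generate_pow_card[OF \<epsilon>_unit] by (simp add: U_def card_Diff_singleton)
  moreover have "\<one>\<^bsub>U\<^esub> = 1"
    by (simp add: U_def)
  ultimately show ?thesis
    using U.pow_eq_id[OF \<epsilon>_unit] by (simp add: pow)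
qed

lemma frobenius_diff:
  fixes x y :: "'a::comm_ring_1"
  assumes "prime CHAR('a)" and "r = CHAR('a) ^ e"
  shows "(x - y) ^ r = x ^ r - y ^ r"
  using freshmans_dream'[OF assms, of "x - y" y] by (simp add: eq_diff_eq)

lemma power_geometric_sum_gcd:
  fixes x :: "'a::comm_monoid_mult"
  assumes x: "x ^ (p ^ m) = x" and m: "0 < m" and d: "d = gcd m j"
  shows "x ^ (\<Sum>l<m div d. (p ^ j) ^ l) = x ^ (\<Sum>l<m div d. (p ^ d) ^ l)"
proof -
  define n where "n = m div d"
  define h where "h l = (j div d * l) mod n" for l
  have m_eq: "m = d * n" and j_eq: "j = d * (j div d)"
    using d by (simp_all add: n_def)
  have "coprime (j div d) n"
    using div_gcd_coprime[of m j] m d by (simp add: n_def coprime_commute)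
  then have "inj_on h {..<n}"
  proof (intro inj_onI)
    fix x y assume "coprime (j div d) n" "x \<in> {..<n}" "y \<in> {..<n}" "h x = h y"
    then show "x = y"
      by (auto simp: h_def mult.commute[of "j div d"] cong_def[symmetric] cong_less_imp_eq_nat
          dest: cong_mult_rcancel_nat[THEN iffD1, rotated])
  qed
  moreover have "h ` {..<n} \<subseteq> {..<n}"
    using m by (auto simp: h_def m_eq)
  ultimately have h: "bij_betw h {..<n} {..<n}"
    by (simp add: bij_betw_def endo_inj_surj)
  have conj: "x ^ ((p ^ j) ^ l) = x ^ ((p ^ d) ^ h l)" for l
  proof -
    have "(j * l) mod m = d * h l"
      by (subst m_eq, subst j_eq) (simp add: h_def mult.assoc mod_mult_mult1)
    then show ?thesis
      using power_prime_power_mod[OF x, of "j * l"] by (simp flip: power_mult)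
  qed
  have "x ^ (\<Sum>l<n. (p ^ j) ^ l) = (\<Prod>l<n. x ^ ((p ^ d) ^ h l))"
    by (simp add: power_sum conj)
  also have "\<dots> = x ^ (\<Sum>l<n. (p ^ d) ^ l)"
    using prod.reindex_bij_betw[OF h, of "\<lambda>l. x ^ ((p ^ d) ^ l)"] by (simp add: power_sum)
  finally show ?thesis
    by (simp add: n_def)
qed

lemma frobenius_affine_solution:
  fixes \<beta> w N R :: "'a::field"
  assumes char: "prime CHAR('a)" and r: "r = CHAR('a) ^ e"
    and \<beta>: "\<beta> \<noteq> 0" "\<beta> ^ (r ^ n) = \<beta>" and w: "w ^ (r ^ n) = w"
    and N: "N = \<beta> ^ (\<Sum>l<n. r ^ l)" "N \<noteq> 1"
    and R: "R = N / (1 - N) * (\<Sum>k<n. inverse \<beta> ^ (\<Sum>l<Suc k. r ^ l) * w ^ (r ^ k))"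
  shows "R ^ r = \<beta> * R + w"
proof -
  define h where "h k = inverse \<beta> ^ (\<Sum>l<Suc k. r ^ l) * w ^ (r ^ k)" for k
  define S where "S = (\<Sum>k<n. h k)"
  have N0: "N \<noteq> 0"
    using N \<beta> by simp
  \<comment> \<open>Raising to the power \<open>r\<close> turns each summand into \<open>\<beta>\<close> times the next one, so the
    sum telescopes.\<close>
  have h_step: "h k ^ r = \<beta> * h (Suc k)" for k
  proof -
    have "inverse \<beta> ^ (\<Sum>l<Suc (Suc k). r ^ l) = inverse \<beta> * (inverse \<beta> ^ (\<Sum>l<Suc k. r ^ l)) ^ r"
      by (simp only: geometric_sum_Suc[of r "Suc k"] power_add power_one_right power_mult
          mult.commute[of r])
    moreover have "(w ^ (r ^ k)) ^ r = w ^ (r ^ Suc k)"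
      by (simp only: power_Suc2 power_mult)
    ultimately show ?thesis
      using \<beta>(1) by (simp add: h_def power_mult_distrib field_simps del: sum.lessThan_Suc)
  qed
  have h_last: "h n = inverse N * h 0"
    using \<beta> w by (simp add: h_def N(1) power_add power_inverse)
  have "N ^ r * \<beta> = N * \<beta>"
  proof -
    have "N ^ r * \<beta> = \<beta> ^ (1 + r * (\<Sum>l<n. r ^ l))"
      by (simp add: N(1) power_add power_mult mult.commute[of r] flip: power_Suc2)
    also have "\<dots> = N * \<beta>"
      by (simp only: geometric_sum_Suc[symmetric]) (simp add: N(1) power_add \<beta>(2))
    finally show ?thesis .
  qed
  then have N_fixed: "N ^ r = N"
    using \<beta>(1) by simp
  have "S ^ r = \<beta> * (\<Sum>k<n. h (Suc k))"
    by (simp add: S_def freshmans_dream_sum'[OF char r] h_step sum_distrib_left)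
  also have "(\<Sum>k<n. h (Suc k)) = S + (inverse N - 1) * h 0"
    using sum.lessThan_Suc_shift[of h n] by (simp add: S_def h_last algebra_simps)
  also have "\<beta> * h 0 = w"
    using \<beta>(1) by (simp add: h_def)
  then have "\<beta> * (S + (inverse N - 1) * h 0) = \<beta> * S + (inverse N - 1) * w"
    by (simp add: algebra_simps)
  finally have S_step: "S ^ r = \<beta> * S + (inverse N - 1) * w" .
  have "(N / (1 - N)) ^ r = N / (1 - N)"
    using frobenius_diff[OF char r, of 1 N] by (simp add: power_divide N_fixed)
  moreover have R_S: "R = N / (1 - N) * S"
    unfolding R S_def h_def ..
  ultimately have "R ^ r = N / (1 - N) * (\<beta> * S + (inverse N - 1) * w)"
    by (simp only: power_mult_distrib S_step)
  also have "\<dots> = \<beta> * R + w"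
    using N0 N(2) by (simp add: R_S field_simps)
  finally show ?thesis .
qed

locale Fq2 =
  fixes p m q :: nat and \<epsilon> :: "'a::{field,finite}"
  assumes prime_p: "prime p" and odd_p: "odd p" and m_pos: "m > 0" and q_def: "q = p ^ m"
    and card_eq: "card (UNIV :: 'a set) = q ^ 2" and primitive: "primitive_elem \<epsilon>"
begin

lemma p_ge_3: "p \<ge> 3"
  using prime_ge_2_nat[OF prime_p] odd_p by presburger

lemma q_ge_3: "q \<ge> 3"
proof -
  have "p ^ 1 \<le> p ^ m"
    by (rule power_increasing) (use m_pos p_ge_3 in auto)
  then show ?thesis
    using p_ge_3 q_def by simp
qed

lemma CHAR_eq: "CHAR('a) = p"
proof -
  have "prime CHAR('a)"
    by (simp add: finite_imp_CHAR_pos prime_CHAR_semidom)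
  moreover have "CHAR('a) dvd p ^ (2 * m)"
    using CHAR_dvd_CARD[where 'a='a] by (simp add: card_eq q_def power_mult mult.commute)
  ultimately show ?thesis
    using prime_p by (meson prime_dvd_power primes_dvd_imp_eq)
qed

lemma frob_add: "(x + y :: 'a) ^ (p ^ k) = x ^ (p ^ k) + y ^ (p ^ k)"
  by (rule freshmans_dream') (simp_all add: CHAR_eq prime_p)

lemma frob_diff: "(x - y :: 'a) ^ (p ^ k) = x ^ (p ^ k) - y ^ (p ^ k)"
  by (rule frobenius_diff) (simp_all add: CHAR_eq prime_p)

lemma frob_sum: "(sum f S :: 'a) ^ (p ^ k) = (\<Sum>s\<in>S. f s ^ (p ^ k))"
  by (rule freshmans_dream_sum') (simp_all add: CHAR_eq prime_p)

lemmas frobq_add = frob_add[of _ _ m, folded q_def]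
  and frobq_diff = frob_diff[of _ _ m, folded q_def]
  and frobq_sum = frob_sum[of _ _ m, folded q_def]

lemma q_squared_minus_1: "q * q - 1 = (q + 1) * (q - 1)"
  using q_ge_3 by (simp add: algebra_simps diff_mult_distrib2)

lemma primitive_power_eq_1_iff: "\<epsilon> ^ k = 1 \<longleftrightarrow> (q + 1) * (q - 1) dvd k"
  using primitive_elem_power_eq_1_iff[OF primitive, of k]
  by (simp only: card_eq power2_eq_square q_squared_minus_1)

lemma unit_power_card: "x \<noteq> 0 \<Longrightarrow> x ^ (q * q - 1) = (1 :: 'a)"
proof -
  assume "x \<noteq> 0"
  then obtain k where "x = \<epsilon> ^ k"
    using primitive by (auto simp: primitive_elem_def)
  moreover have "\<epsilon> ^ (q * q - 1) = 1"
    by (simp only: primitive_power_eq_1_iff q_squared_minus_1 dvd_refl)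
  ultimately show ?thesis
    by (simp add: power_power_commute[of \<epsilon> k])
qed

lemma power_q_q: "(x ^ q) ^ q = (x :: 'a)"
proof (cases "x = 0")
  case False
  have "(x ^ q) ^ q = x ^ (q * q - 1) * x"
    using power_minus_mult[of "q * q" x] q_ge_3 by (simp flip: power_mult)
  then show ?thesis
    using unit_power_card[OF False] by simp
qed (use q_ge_3 in simp)

lemma trace_in_Fq: "(x ^ q + x :: 'a) ^ q = x ^ q + x"
  by (simp add: frobq_add power_q_q)

lemma two_q: "(2 :: 'a) ^ q = 2"
  using frobq_add[of 1 1] by simp

lemma two_neq_0: "(2 :: 'a) \<noteq> 0"
proof
  assume "(2 :: 'a) = 0"
  then have "p dvd 2"
    using of_nat_eq_0_iff_char_dvd[of 2, where 'a='a] by (simp add: CHAR_eq)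
  then show False
    using p_ge_3 by (auto dest: dvd_imp_le)
qed

lemma Fq_unit_power: "x ^ q = x \<Longrightarrow> x \<noteq> 0 \<Longrightarrow> x ^ (q - 1) = (1 :: 'a)"
  using power_minus_mult[of q x] q_ge_3 by simp

lemma power_half_order: "\<epsilon> ^ ((q + 1) * (q - 1) div 2) = -1"
proof -
  define M where "M = (q + 1) * (q - 1)"
  define h where "h = \<epsilon> ^ (M div 2)"
  have "M > 0"
    using q_ge_3 by (simp add: M_def)
  have "even M"
    using odd_p by (simp add: M_def q_def)
  then have M2: "M div 2 + M div 2 = M"
    by (auto elim: evenE)
  have "h * h = 1"
    by (simp only: h_def M2 flip: power_add) (simp add: primitive_power_eq_1_iff M_def)
  moreover have "h \<noteq> 1"
  proof
    assume "h = 1"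
    then have "M dvd M div 2"
      by (simp add: h_def primitive_power_eq_1_iff M_def)
    then show False
      using \<open>M > 0\<close> M2 by (auto dest: dvd_imp_le)
  qed
  ultimately have "(h + 1) * (h - 1) = 0"
    by (simp add: algebra_simps)
  then show ?thesis
    using \<open>h \<noteq> 1\<close> by (simp add: h_def M_def eq_neg_iff_add_eq_0)
qed

lemma odd_power_conj_eq_minus:
  assumes "odd k"
  shows "(\<epsilon> powi (int ((q + 1) div 2) * k)) ^ q = - (\<epsilon> powi (int ((q + 1) div 2) * k))"
proof -
  define \<theta> where "\<theta> = \<epsilon> ^ ((q + 1) div 2)"
  have "odd q"
    using odd_p q_def by simp
  then obtain l where q: "q = 2 * l + 1"
    by (elim oddE)
  have "(q + 1) div 2 * q = (q + 1) div 2 + (q + 1) * (q - 1) div 2"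
    by (simp add: q algebra_simps)
  then have "\<theta> ^ q = \<theta> * \<epsilon> ^ ((q + 1) * (q - 1) div 2)"
    by (simp only: \<theta>_def flip: power_mult power_add)
  then have "\<theta> ^ q = - \<theta>"
    by (simp only: power_half_order mult_minus1_right)
  moreover have "(\<theta> powi k) ^ q = (\<theta> ^ q) powi k"
    by (simp only: power_int_power power_int_power' mult.commute)
  ultimately have "(\<theta> powi k) ^ q = - (\<theta> powi k)"
    using assms by simp
  then show ?thesis
    by (simp add: \<theta>_def power_int_mult)
qed

lemma Fq_unit_eq_power:
  fixes b :: 'a
  assumes "b ^ q = b" and "b \<noteq> 0"
  obtains a where "b = (\<epsilon> ^ (q + 1)) ^ a"
proof -
  obtain k where k: "b = \<epsilon> ^ k"
    using assms primitive by (auto simp: primitive_elem_def)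
  have "\<epsilon> ^ (k * (q - 1)) = 1"
    using Fq_unit_power[OF assms] by (simp add: k power_mult)
  then have "(q + 1) * (q - 1) dvd k * (q - 1)"
    by (simp only: primitive_power_eq_1_iff)
  then have "(q + 1) dvd k"
    using q_ge_3 dvd_times_right_cancel_iff[of "q - 1" "q + 1" k] by simp
  then obtain a where "k = (q + 1) * a" ..
  then show ?thesis
    using that k by (metis power_mult)
qed

lemma Fq_generator_power_eq_1_iff: "(\<epsilon> ^ (q + 1)) ^ k = 1 \<longleftrightarrow> (q - 1) dvd k"
  using dvd_times_left_cancel_iff[of "q + 1" "q - 1" k]
  by (simp only: primitive_power_eq_1_iff flip: power_mult)

lemma power_orbit_length:
  assumes "(x :: 'a) ^ q = x"
  shows "x ^ ((p ^ j) ^ (m div gcd m j)) = x"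
proof -
  have "(p ^ j) ^ (m div gcd m j) = q ^ (j div gcd m j)"
    by (simp add: q_def div_mult_swap dvd_div_mult mult.commute flip: power_mult)
  then show ?thesis
    using assms by (simp add: power_iterate_fixed)
qed

lemma normF_eq_power_orbit_sum:
  assumes "(b :: 'a) ^ q = b"
  shows "normF p m (gcd m j) b = b ^ (\<Sum>l<m div gcd m j. (p ^ j) ^ l)"
proof -
  define d where "d = gcd m j"
  have "p ^ 1 \<le> p ^ d"
    using m_pos p_ge_3 by (intro power_increasing) (simp_all add: d_def Suc_le_eq)
  moreover have "p ^ m = (p ^ d) ^ (m div d)"
    by (simp add: d_def flip: power_mult)
  ultimately have "(p ^ m - 1) div (p ^ d - 1) = (\<Sum>l<m div d. (p ^ d) ^ l)"
    using power_minus_one_div_nat[of "p ^ d" "m div d"] p_ge_3 by simp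
  also have "b ^ \<dots> = b ^ (\<Sum>l<m div d. (p ^ j) ^ l)"
    using power_geometric_sum_gcd[of b p m d j] assms m_pos by (simp add: q_def d_def)
  finally show ?thesis
    by (simp add: normF_def d_def)
qed

lemma norm_eq_1_imp_generator_power:
  fixes b :: 'a
  assumes d: "d dvd m" and b: "b ^ q = b" "b \<noteq> 0" and norm: "normF p m d b = 1"
  obtains c where "b = (\<epsilon> ^ (q + 1)) ^ ((p ^ d - 1) * c)"
proof -
  define K where "K = (p ^ m - 1) div (p ^ d - 1)"
  have "(p ^ d - 1) dvd (p ^ m - 1)"
    using power_minus_one_dvd_nat[of p d "m div d"] p_ge_3 d by simp
  then have q1: "q - 1 = (p ^ d - 1) * K"
    by (simp add: K_def q_def)
  then have "K > 0"
    using q_ge_3 by (cases K) simp_all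
  obtain a where a: "b = (\<epsilon> ^ (q + 1)) ^ a"
    using Fq_unit_eq_power[OF b] by blast
  have "(\<epsilon> ^ (q + 1)) ^ (a * K) = 1"
    using norm by (simp add: a normF_def K_def power_mult)
  then have "(p ^ d - 1) * K dvd a * K"
    by (simp only: Fq_generator_power_eq_1_iff q1)
  then have "(p ^ d - 1) dvd a"
    using \<open>K > 0\<close> dvd_times_right_cancel_iff[of K "p ^ d - 1" a] by simp
  then show ?thesis
    using that a by (auto elim: dvdE)
qed

text \<open>Hilbert's Theorem 90 for \<open>\<bbbF>\<^sub>q\<close> over \<open>\<bbbF>\<^bsub>p\<^sup>d\<^esub>\<close>, whose Galois group is generated
  by \<open>x \<mapsto> x\<^bsup>p\<^sup>j\<^esup>\<close>.\<close>

lemma norm_eq_1_imp_root: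
  fixes b :: 'a
  assumes j: "0 < j" and b: "b ^ q = b" "b \<noteq> 0" and norm: "normF p m (gcd m j) b = 1"
  obtains s where "s \<noteq> 0" "s ^ q = s" "s ^ (p ^ j) = b * s"
proof -
  define d where "d = gcd m j"
  define \<omega> where "\<omega> = \<epsilon> ^ (q + 1)"
  obtain c where c: "b = \<omega> ^ ((p ^ d - 1) * c)"
    unfolding \<omega>_def by (rule norm_eq_1_imp_generator_power[OF _ b norm[folded d_def]]) (simp add: d_def)
  have "p ^ j \<ge> p ^ 1"
    using j p_ge_3 by (intro power_increasing) simp_all
  then have "p ^ j - 1 \<noteq> 0"
    using p_ge_3 by simp
  moreover have "gcd (p ^ j - 1) (q - 1) = p ^ d - 1"
    using gcd_power_minus_one_nat[of p j m] p_ge_3 by (simp add: q_def d_def gcd.commute)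
  ultimately obtain x y where xy: "(p ^ j - 1) * x = (q - 1) * y + (p ^ d - 1)"
    using bezout_nat by metis
  define s where "s = \<omega> ^ (c * x)"
  have \<omega>_q1: "\<omega> ^ (q - 1) = 1"
    by (simp only: \<omega>_def Fq_generator_power_eq_1_iff dvd_refl)
  have "c * x * (p ^ j - 1) = c * ((p ^ j - 1) * x)"
    by (simp only: mult_ac)
  also have "\<dots> = c * ((q - 1) * y + (p ^ d - 1))"
    by (simp only: xy)
  also have "\<dots> = (q - 1) * (c * y) + (p ^ d - 1) * c"
    by (simp only: distrib_left mult_ac)
  finally have "s ^ (p ^ j - 1) = (\<omega> ^ (q - 1)) ^ (c * y) * \<omega> ^ ((p ^ d - 1) * c)"
    by (simp only: s_def power_add flip: power_mult)
  then have s_pj1: "s ^ (p ^ j - 1) = b"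
    by (simp only: \<omega>_q1 power_one mult_1_left c)
  have "\<omega> \<noteq> 0"
    using primitive by (simp add: \<omega>_def primitive_elem_def)
  then have "s \<noteq> 0"
    by (simp add: s_def)
  moreover have "\<omega> ^ q = \<omega>"
    using power_minus_mult[of q \<omega>] \<omega>_q1 q_ge_3 by simp
  then have "s ^ q = s"
    by (simp add: s_def power_power_commute[of \<omega> _ q])
  moreover have "s ^ (p ^ j) = b * s"
    using power_minus_mult[of "p ^ j" s] \<open>p ^ j - 1 \<noteq> 0\<close> s_pj1 p_ge_3 by (simp add: mult.commute)
  ultimately show ?thesis
    using that by blast
qed

end

locale Fq2_perm_poly = Fq2 p m q \<epsilon> for p m q and \<epsilon> :: "'a::{field,finite}" +
  fixes i j d t :: nat and d1 d2 d3 :: int and \<delta> b1 b2 b3 :: 'a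
    and P G :: "'a \<Rightarrow> 'a" and A B C e1 e2 e3 :: 'a
  assumes b1: "b1 ^ q = b1" and b2: "b2 ^ q = b2" and b3: "b3 ^ q = b3"
    and odd_d1: "odd d1" and odd_d2: "odd d2" and odd_d3: "odd d3"
    and t_def: "t = (q + 1) div 2"
    and i_less: "i < 2 * m" and j_def: "j = i mod m" and d_def: "d = gcd m j"
    and e1_def: "e1 = \<epsilon> powi (int t * d1)" and e2_def: "e2 = \<epsilon> powi (int t * d2)"
    and e3_def: "e3 = \<epsilon> powi (int t * d3)"
    and P_def: "P = (\<lambda>x. b1 * e1 * (x ^ q + x + \<delta>) ^ (p ^ i + q)
                 + b2 * e2 * (x ^ q + x + \<delta>) ^ (p ^ i + 1)
                 + b3 * e3 * (x ^ q + x + \<delta>) ^ (2 * p ^ i) - x)"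
    and A_def: "A = (\<delta> ^ q - \<delta>) * (b1 * e1 - b2 * e2) + 2 * b3 * e3 * (\<delta> ^ (p ^ i) - \<delta> ^ (p ^ i * q))"
    and B_def: "B = 1 + (\<delta> ^ (p ^ i * q) - \<delta> ^ (p ^ i)) * (b1 * e1 + b2 * e2)"
    and C_def: "C = (\<delta> ^ (p ^ i + q) - \<delta> ^ (p ^ i * q + 1)) * b1 * e1
           + (\<delta> ^ (p ^ i + 1) - \<delta> ^ (p ^ i * q + q)) * b2 * e2
           + (\<delta> ^ (2 * p ^ i) - \<delta> ^ (2 * p ^ i * q)) * b3 * e3"
    and G_def: "G = (\<lambda>y. b1 * e1 * y ^ (p ^ i + q) + b2 * e2 * y ^ (p ^ i + 1) + b3 * e3 * y ^ (2 * p ^ i))"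
begin

lemma e_conj: "e1 ^ q = - e1" "e2 ^ q = - e2" "e3 ^ q = - e3"
  using odd_power_conj_eq_minus[OF odd_d1] odd_power_conj_eq_minus[OF odd_d2]
    odd_power_conj_eq_minus[OF odd_d3]
  by (simp_all add: e1_def e2_def e3_def t_def)

lemma P_eq: "P x = G (x ^ q + x + \<delta>) - x"
  by (simp add: P_def G_def)

lemma G_eq: "G y = b1 * e1 * y ^ (p ^ i) * y ^ q + b2 * e2 * y ^ (p ^ i) * y + b3 * e3 * (y ^ (p ^ i))\<^sup>2"
  by (simp add: G_def power_add power_mult mult.commute[of 2] mult.assoc)

lemma trace_G:
  assumes s: "s ^ q = s"
  shows "G (s + \<delta>) ^ q + G (s + \<delta>) = A * s ^ (p ^ i) + (1 - B) * s + C"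
proof -
  define u where "u = s ^ (p ^ i)"
  define D where "D = \<delta> ^ (p ^ i)"
  have u: "u ^ q = u"
    using s by (simp add: u_def power_power_commute[of s _ q])
  have D: "\<delta> ^ (p ^ i * q) = D ^ q"
    by (simp add: D_def power_mult)
  have A': "A = (\<delta> ^ q - \<delta>) * (b1 * e1 - b2 * e2) + 2 * b3 * e3 * (D - D ^ q)"
    by (simp add: A_def D D_def)
  have B': "B = 1 + (D ^ q - D) * (b1 * e1 + b2 * e2)"
    by (simp add: B_def D D_def)
  have C': "C = (D * \<delta> ^ q - D ^ q * \<delta>) * b1 * e1 + (D * \<delta> - D ^ q * \<delta> ^ q) * b2 * e2
      + (D\<^sup>2 - (D ^ q)\<^sup>2) * b3 * e3"
    unfolding C_def D_def by (simp only: power_add power_one_right ac_simps flip: power_mult)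
  have G: "G (s + \<delta>) = b1 * e1 * (u + D) * (s + \<delta> ^ q) + b2 * e2 * (u + D) * (s + \<delta>)
      + b3 * e3 * (u + D)\<^sup>2"
    by (simp add: G_eq u_def D_def frob_add frobq_add s)
  have "G (s + \<delta>) ^ q = b1 * (- e1) * (u + D ^ q) * (s + \<delta>) + b2 * (- e2) * (u + D ^ q) * (s + \<delta> ^ q)
      + b3 * (- e3) * (u + D ^ q)\<^sup>2"
    unfolding G by (simp only: frobq_add power_mult_distrib b1 b2 b3 e_conj s u power_q_q
        power_power_commute[of _ 2 q])
  with G show ?thesis
    unfolding A' B' C' u_def[symmetric] by (simp add: algebra_simps power2_eq_square)
qed

lemma power_p_i_q: "((x :: 'a) ^ (p ^ i)) ^ q = x ^ (p ^ i * q)" "(x ^ (p ^ i * q)) ^ q = x ^ (p ^ i)"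
  by (simp_all only: power_mult power_q_q)

lemma A_in_Fq: "A ^ q = A"
  unfolding A_def
  by (simp add: frobq_add frobq_diff power_mult_distrib b1 b2 b3 e_conj power_q_q two_q power_p_i_q)
     (simp add: algebra_simps)

lemma B_in_Fq: "B ^ q = B"
  unfolding B_def
  by (simp add: frobq_add frobq_diff power_mult_distrib b1 b2 b3 e_conj power_q_q power_p_i_q)
     (simp add: algebra_simps)

lemma trace_G_0: "G \<delta> ^ q + G \<delta> = C"
proof -
  have "(0 :: 'a) ^ (p ^ i) = 0"
    using prime_p by (simp add: prime_gt_0_nat)
  then show ?thesis
    using trace_G[of 0] q_ge_3 by simp
qed

lemma C_in_Fq: "C ^ q = C"
  using trace_in_Fq[of "G \<delta>"] by (simp add: trace_G_0)

lemma P_right_inverse: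
  assumes R: "R ^ q = R" and eq: "A * R ^ (p ^ i) - B * R + C = c ^ q + c"
  shows "P (G (R + \<delta>) - c) = c"
proof -
  have "(G (R + \<delta>) - c) ^ q + (G (R + \<delta>) - c) = (G (R + \<delta>) ^ q + G (R + \<delta>)) - (c ^ q + c)"
    by (simp add: frobq_diff algebra_simps)
  also have "\<dots> = R"
    unfolding trace_G[OF R] eq[symmetric] by (simp add: algebra_simps)
  finally show ?thesis
    by (simp add: P_eq)
qed

lemma not_inj_P:
  assumes s: "s \<noteq> 0" "s ^ q = s" and root: "A * s ^ (p ^ i) = B * s"
  shows "\<not> inj P"
proof
  assume inj: "inj P"
  define x where "x = s / 2"
  define y where "y = x - G (s + \<delta>) + G \<delta>"
  have x: "x ^ q + x = s"
    using s two_neq_0 by (simp add: x_def power_divide two_q field_simps)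
  have "y ^ q + y = (x ^ q + x) - (G (s + \<delta>) ^ q + G (s + \<delta>)) + (G \<delta> ^ q + G \<delta>)"
    by (simp add: y_def frobq_diff frobq_add algebra_simps)
  also have "\<dots> = s - (A * s ^ (p ^ i) + (1 - B) * s + C) + C"
    by (simp only: x trace_G[OF s(2)] trace_G_0)
  also have "\<dots> = 0"
    using root by (simp add: algebra_simps)
  finally have y: "y ^ q + y = 0" .
  have "P y = P x"
    by (simp add: P_eq x y) (simp add: y_def)
  then show False
    using inj x y s by (auto dest: injD)
qed

lemma power_p_i_eq_power_p_j: "(x :: 'a) ^ q = x \<Longrightarrow> x ^ (p ^ i) = x ^ (p ^ j)"
  using power_prime_power_mod[of x p m i] by (simp add: q_def j_def)

lemma j_pos:
  assumes "i \<notin> {0, m}"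
  shows "0 < j"
proof (rule ccontr)
  assume "\<not> 0 < j"
  then obtain k where k: "i = m * k"
    by (auto simp: j_def elim: dvdE)
  then have "k < 2"
    using i_less by simp
  moreover have "k \<noteq> 0" "k \<noteq> 1"
    using assms k by auto
  ultimately show False
    by simp
qed

lemma P_right_inverse_i_0_or_m:
  assumes i: "i \<in> {0, m}" and AB: "A - B \<noteq> 0"
  shows "P (G (inverse (A - B) * (c ^ q + c) - inverse (A - B) * C + \<delta>) - c) = c"
proof (rule P_right_inverse)
  let ?R = "inverse (A - B) * (c ^ q + c) - inverse (A - B) * C"
  show R: "?R ^ q = ?R"
    by (simp add: frobq_diff frobq_add power_mult_distrib power_inverse A_in_Fq B_in_Fq C_in_Fq power_q_q)
  have Ri: "?R ^ (p ^ i) = ?R"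
    using i R q_def by auto
  have "A * ?R - B * ?R + C = (A - B) * inverse (A - B) * (c ^ q + c - C) + C"
    by (simp add: algebra_simps)
  then show "A * ?R ^ (p ^ i) - B * ?R + C = c ^ q + c"
    unfolding Ri using AB by simp
qed

lemma not_inj_A_eq_B: "A = B \<Longrightarrow> \<not> inj P"
  by (rule not_inj_P[of 1]) simp_all

lemma P_right_inverse_A_zero:
  assumes "A = 0" and "B \<noteq> 0"
  shows "P (G (- inverse B * (c ^ q + c) + inverse B * C + \<delta>) - c) = c"
proof (rule P_right_inverse)
  let ?R = "- inverse B * (c ^ q + c) + inverse B * C"
  show "?R ^ q = ?R"
    by (simp add: frobq_add frobq_diff power_mult_distrib power_inverse B_in_Fq C_in_Fq power_q_q)
  show "A * ?R ^ (p ^ i) - B * ?R + C = c ^ q + c"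
    using assms by (simp add: field_simps)
qed

lemma P_right_inverse_B_zero:
  assumes "A \<noteq> 0" and "B = 0"
  shows "P (G (inverse A ^ (p ^ (m - j)) * (c ^ q + c) ^ (p ^ (m - j)) - (C / A) ^ (p ^ (m - j)) + \<delta>) - c) = c"
proof -
  define w where "w = (c ^ q + c - C) / A"
  define R where "R = w ^ (p ^ (m - j))"
  have w: "w ^ q = w"
    by (simp add: w_def frobq_diff frobq_add power_divide A_in_Fq C_in_Fq power_q_q)
  have R: "R ^ q = R"
    using w by (simp add: R_def power_power_commute[of w _ q])
  have "R ^ (p ^ i) = R ^ (p ^ j)"
    by (rule power_p_i_eq_power_p_j[OF R])
  also have "\<dots> = w ^ (p ^ (m - j) * p ^ j)"
    by (simp add: R_def power_mult)
  also have "p ^ (m - j) * p ^ j = q"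
    using m_pos by (simp add: q_def j_def flip: power_add)
  finally have "R ^ (p ^ i) = w"
    by (simp only: w)
  then have "A * R ^ (p ^ i) - B * R + C = c ^ q + c"
    using assms by (simp add: w_def)
  then have "P (G (R + \<delta>) - c) = c"
    by (rule P_right_inverse[OF R])
  moreover have "R = inverse A ^ (p ^ (m - j)) * (c ^ q + c) ^ (p ^ (m - j)) - (C / A) ^ (p ^ (m - j))"
    by (simp add: R_def w_def divide_inverse_commute right_diff_distrib frob_diff power_mult_distrib)
  ultimately show ?thesis
    by simp
qed

lemma P_right_inverse_norm_ne_1:
  assumes i: "i \<notin> {0, m}" and AB: "A * B \<noteq> 0" and norm: "normF p m d (B / A) \<noteq> 1"
  shows "P (G (\<delta> + normF p m d (B / A) / (1 - normF p m d (B / A)) *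
      (\<Sum>k<m div d. (A / B) ^ ((p ^ ((k + 1) * j) - 1) div (p ^ j - 1))
          * ((c ^ q + c) / A - C / A) ^ (p ^ (k * j)))) - c) = c"
proof -
  define n where "n = m div d"
  define r where "r = p ^ j"
  define \<beta> where "\<beta> = B / A"
  define w where "w = (c ^ q + c) / A - C / A"
  define N where "N = normF p m d \<beta>"
  define R where "R = N / (1 - N) * (\<Sum>k<n. inverse \<beta> ^ (\<Sum>l<Suc k. r ^ l) * w ^ (r ^ k))"
  have "p ^ 1 \<le> r"
    unfolding r_def using j_pos[OF i] p_ge_3 by (intro power_increasing) simp_all
  then have r: "r \<ge> 2"
    using p_ge_3 by simp
  have \<beta>: "\<beta> ^ q = \<beta>" "\<beta> \<noteq> 0"
    using AB by (simp_all add: \<beta>_def power_divide A_in_Fq B_in_Fq)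
  have w: "w ^ q = w"
    by (simp add: w_def frobq_diff frobq_add power_divide A_in_Fq C_in_Fq power_q_q)
  have fixed: "x ^ (r ^ n) = x" if "x ^ q = x" for x :: 'a
    using power_orbit_length[OF that] by (simp add: r_def n_def d_def)
  have N: "N = \<beta> ^ (\<Sum>l<n. r ^ l)"
    using normF_eq_power_orbit_sum[OF \<beta>(1)] by (simp add: N_def r_def n_def d_def)
  have R_root: "R ^ r = \<beta> * R + w"
    using norm CHAR_eq prime_p
    by (intro frobenius_affine_solution[OF _ _ \<beta>(2) fixed[OF \<beta>(1)] fixed[OF w] N _ R_def])
       (simp_all add: r_def N_def \<beta>_def)
  have "N ^ q = N"
    using \<beta>(1) by (simp add: N power_power_commute[of \<beta> _ q])
  then have R: "R ^ q = R"
    by (simp add: R_def frobq_sum frobq_diff power_mult_distrib power_divide power_inverse \<beta>(1) w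
        power_power_commute[of _ _ q])
  have "A * R ^ (p ^ i) - B * R + C = A * w + C"
    using AB by (simp add: power_p_i_eq_power_p_j[OF R] R_root \<beta>_def flip: r_def) (simp add: algebra_simps)
  also have "\<dots> = c ^ q + c"
    using AB by (simp add: w_def field_simps)
  finally have "P (G (R + \<delta>) - c) = c"
    by (rule P_right_inverse[OF R])
  moreover have E: "(p ^ ((k + 1) * j) - 1) div (p ^ j - 1) = (\<Sum>l<Suc k. r ^ l)" for k
    using power_mult_minus_one_div_nat[of p j "Suc k"] r by (simp add: r_def)
  ultimately show ?thesis
    unfolding E by (simp add: R_def N_def \<beta>_def w_def n_def r_def power_mult mult.commute[of _ j]
        add.commute inverse_divide)
qed

lemma not_inj_norm_eq_1:
  assumes i: "i \<notin> {0, m}" and AB: "A * B \<noteq> 0" and norm: "normF p m d (B / A) = 1"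
  shows "\<not> inj P"
proof -
  have "(B / A) ^ q = B / A" "B / A \<noteq> 0"
    using AB by (simp_all add: power_divide A_in_Fq B_in_Fq)
  then obtain s where s: "s \<noteq> 0" "s ^ q = s" "s ^ (p ^ j) = B / A * s"
    using norm_eq_1_imp_root[OF j_pos[OF i]] norm d_def by metis
  then have "A * s ^ (p ^ i) = B * s"
    using AB by (simp add: power_p_i_eq_power_p_j)
  then show ?thesis
    using not_inj_P s by blast
qed

end

theorem theorem3p15:
  fixes p m q i j d t :: nat and d1 d2 d3 :: int
    and \<delta> b1 b2 b3 \<epsilon> :: "'a::{field,finite}"
    and P G :: "'a \<Rightarrow> 'a" and A B C e1 e2 e3 :: 'a
  assumes "prime p" and "odd p" and "m > 0" and "q = p ^ m"
    and "card (UNIV :: 'a set) = q ^ 2"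
    and "b1 ^ q = b1" and "b2 ^ q = b2" and "b3 ^ q = b3"
    and "primitive_elem \<epsilon>"
    and "odd d1" and "odd d2" and "odd d3"
    and "t = (q + 1) div 2"
    and "i < 2 * m" and "j = i mod m" and "d = gcd m j"
    and "e1 = \<epsilon> powi (int t * d1)" and "e2 = \<epsilon> powi (int t * d2)" and "e3 = \<epsilon> powi (int t * d3)"
    and "P = (\<lambda>x. b1 * e1 * (x ^ q + x + \<delta>) ^ (p ^ i + q)
                 + b2 * e2 * (x ^ q + x + \<delta>) ^ (p ^ i + 1)
                 + b3 * e3 * (x ^ q + x + \<delta>) ^ (2 * p ^ i) - x)"
    and "A = (\<delta> ^ q - \<delta>) * (b1 * e1 - b2 * e2) + 2 * b3 * e3 * (\<delta> ^ (p ^ i) - \<delta> ^ (p ^ i * q))"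
    and "B = 1 + (\<delta> ^ (p ^ i * q) - \<delta> ^ (p ^ i)) * (b1 * e1 + b2 * e2)"
    and "C = (\<delta> ^ (p ^ i + q) - \<delta> ^ (p ^ i * q + 1)) * b1 * e1
           + (\<delta> ^ (p ^ i + 1) - \<delta> ^ (p ^ i * q + q)) * b2 * e2
           + (\<delta> ^ (2 * p ^ i) - \<delta> ^ (2 * p ^ i * q)) * b3 * e3"
    and "G = (\<lambda>y. b1 * e1 * y ^ (p ^ i + q) + b2 * e2 * y ^ (p ^ i + 1) + b3 * e3 * y ^ (2 * p ^ i))"
  shows
    "(i \<in> {0, m} \<longrightarrow>
        (bij P \<longleftrightarrow> A - B \<noteq> 0) \<and>
        (A - B \<noteq> 0 \<longrightarrow>
          (let Q = (\<lambda>x. G (inverse (A - B) * (x ^ q + x) - inverse (A - B) * C + \<delta>) - x)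
           in \<forall>c. P (Q c) = c \<and> Q (P c) = c)))
   \<and> (i \<notin> {0, m} \<and> A = 0 \<and> B \<noteq> 0 \<longrightarrow>
        bij P \<and>
        (let Q = (\<lambda>x. G (- inverse B * (x ^ q + x) + inverse B * C + \<delta>) - x)
         in \<forall>c. P (Q c) = c \<and> Q (P c) = c))
   \<and> (i \<notin> {0, m} \<and> A \<noteq> 0 \<and> B = 0 \<longrightarrow>
        bij P \<and>
        (let Q = (\<lambda>x. G (inverse A ^ (p ^ (m - j)) * (x ^ q + x) ^ (p ^ (m - j))
                          - (C / A) ^ (p ^ (m - j)) + \<delta>) - x)
         in \<forall>c. P (Q c) = c \<and> Q (P c) = c))
   \<and> (i \<notin> {0, m} \<and> A * B \<noteq> 0 \<longrightarrow>
        (bij P \<longleftrightarrow> normF p m d (B / A) \<noteq> 1) \<and>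
        (normF p m d (B / A) \<noteq> 1 \<longrightarrow>
          (let N = normF p m d (B / A);
               Q = (\<lambda>x. G (\<delta> + N / (1 - N) *
                      (\<Sum>k<m div d. (A / B) ^ ((p ^ ((k + 1) * j) - 1) div (p ^ j - 1))
                                     * ((x ^ q + x) / A - C / A) ^ (p ^ (k * j)))) - x)
           in \<forall>c. P (Q c) = c \<and> Q (P c) = c)))"
proof -
  interpret Fq2_perm_poly p m q \<epsilon> i j d t d1 d2 d3 \<delta> b1 b2 b3 P G A B C e1 e2 e3
    by unfold_locales (fact assms)+
  note inverse = right_inverse_imp_inverse[of P]
  show ?thesis
    unfolding Let_def
    using inverse[OF P_right_inverse_i_0_or_m] inverse[OF P_right_inverse_A_zero]
      inverse[OF P_right_inverse_B_zero] inverse[OF P_right_inverse_norm_ne_1]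
      not_inj_A_eq_B not_inj_norm_eq_1
    by (auto dest: bij_is_inj)
qed

end
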